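(* For every integer $m\geq 0$, $S_m\subseteq\Lambda_m$.
   Context: $\mathbb{N}=\{1,2,3,\dots\}$, $\mathbb{N}_0=\mathbb{N}\cup\{0\}$. The Collatz map $T:\mathbb{N}\to\mathbb{N}$ is $T(n)=\frac{3n+1}{2}$ if $n$ is odd and $T(n)=\frac{n}{2}$ if $n$ is even; $T^{(k)}$ denotes the $k$-fold composition. The total stopping time is $\sigma_\infty(1)=0$ and, for $n\geq 2$, $\sigma_\infty(n)=\inf\{k\in\mathbb{N}\cup\{\infty\} : T^{(k)}(n)=1\}$. Let $S_0=\{1\}$ and $S_k=\{n\in\mathbb{N}:\sigma_\infty(n)=k\}$ for $k\geq 1$. For $0\leq m\leq 3$ let $\Lambda_m=\{2^m\}$, and for $m\geq 4$ let $\Lambda_m$ be the set of all $n\in\mathbb{N}$ that can be written as $n=\frac{2^m}{3^l}-\sum_{k=1}^{l}\frac{2^{b_k}}{3^k}$ for some integers $l,b_1,\dots,b_l\in\mathbb{N}_0$ with $0\leq l\leq m-3$ and $0\leq b_1<b_2<\cdots<b_l\leq m-4$. *)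

theory Defs
  imports Main "HOL-Library.Extended_Nat"
begin

text \<open>Collatz map T on positive integers (its value at 0 is irrelevant).\<close>
definition T :: "nat \<Rightarrow> nat" where
  "T n = (if odd n then (3 * n + 1) div 2 else n div 2)"

definition sigma_inf :: "nat \<Rightarrow> enat" where
  "sigma_inf n = (if n = 1 then 0
     else if (\<exists>k\<ge>1. (T ^^ k) n = 1) then enat (LEAST k. k \<ge> 1 \<and> (T ^^ k) n = 1)
     else \<infinity>)"

definition S :: "nat \<Rightarrow> nat set" where
  "S k = (if k = 0 then {1} else {n. n \<ge> 1 \<and> sigma_inf n = enat k})"

definition Lambda :: "nat \<Rightarrow> nat set" where
  "Lambda m = (if m \<le> 3 then {2 ^ m}
     else {n. n \<ge> 1 \<and> (\<exists>(l::nat) (b::nat \<Rightarrow> nat). l \<le> m - 3 \<and>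
              (\<forall>i j. 1 \<le> i \<longrightarrow> i < j \<longrightarrow> j \<le> l \<longrightarrow> b i < b j) \<and>
              (\<forall>k. 1 \<le> k \<longrightarrow> k \<le> l \<longrightarrow> b k \<le> m - 4) \<and>
              (of_nat n :: rat) = 2 ^ m / 3 ^ l - (\<Sum>k=1..l. 2 ^ b k / 3 ^ k))})"

end

theory Submission
  imports Defs
begin

text \<open>Read the trajectory of n backwards from T^m(n) = 1: an even step is x = 2 T(x), an odd step is
  x = (2 T(x) - 1)/3, and if it is the k-th odd step and happens at time b it contributes 2^b/3^k. Hence
  n = 2^m/3^l - \<Sum> 2^(b_k)/3^k, where b_1 < ... < b_l are the times of the odd steps. The last three
  steps of every trajectory reaching 1 are forced to be 8 \<rightarrow> 4 \<rightarrow> 2 \<rightarrow> 1, all even, so every b_k is at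
  most m - 4, and being distinct there are at most m - 3 of them.\<close>

lemma double_T: "2 * T x = (if odd x then 3 * x + 1 else x)"
  unfolding T_def by (auto elim!: oddE)

lemma T_eq_1: "T x = 1 \<Longrightarrow> x = 2"
  unfolding T_def by (cases "even x") (auto elim!: evenE oddE, presburger?)

lemma T_eq_2: "T x = 2 \<Longrightarrow> x = 1 \<or> x = 4"
  unfolding T_def by (cases "even x") (auto elim!: evenE oddE, presburger?)

lemma T_eq_4: "T x = 4 \<Longrightarrow> x = 8"
  unfolding T_def by (cases "even x") (auto elim!: evenE oddE, presburger?)

lemma funpow_T_expansion:
  "\<exists>l b. strict_mono_on {1..l} b \<and> (\<forall>k\<in>{1..l}. b k < j \<and> odd ((T ^^ b k) x)) \<and>
     (of_nat x :: rat) = 2 ^ j * of_nat ((T ^^ j) x) / 3 ^ l - (\<Sum>k=1..l. 2 ^ b k / 3 ^ k)"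
proof (induction j)
  case 0
  show ?case by (rule exI[of _ 0]) (simp add: strict_mono_on_def)
next
  case (Suc j)
  then obtain l b where mono: "strict_mono_on {1..l} b"
    and odd_times: "\<forall>k\<in>{1..l}. b k < j \<and> odd ((T ^^ b k) x)"
    and expansion: "(of_nat x :: rat) = 2 ^ j * of_nat ((T ^^ j) x) / 3 ^ l - (\<Sum>k=1..l. 2 ^ b k / 3 ^ k)"
    by blast
  define y where "y = (T ^^ j) x"
  have step: "2 * (T ^^ Suc j) x = (if odd y then 3 * y + 1 else y)"
    using double_T[of y] by (simp add: y_def)
  show ?case
  proof (cases "odd y")
    case False
    then have "(of_nat y :: rat) = 2 * of_nat ((T ^^ Suc j) x)"
      using step by (metis of_nat_mult of_nat_numeral)
    then show ?thesis
      using mono odd_times expansion by (intro exI[of _ l] exI[of _ b]) (auto simp: y_def)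
  next
    case True
    define b' where "b' = b(Suc l := j)"
    have odd_step: "(of_nat ((T ^^ Suc j) x) :: rat) = (3 * of_nat y + 1) / 2"
      using step True by (simp add: of_nat_mult[symmetric] del: of_nat_mult)
    have "2 ^ j * of_nat y / 3 ^ l = 2 ^ Suc j * (of_nat ((T ^^ Suc j) x) :: rat) / 3 ^ Suc l - 2 ^ j / 3 ^ Suc l"
      unfolding odd_step by (simp add: field_simps)
    moreover have "(\<Sum>k=1..Suc l. 2 ^ b' k / 3 ^ k :: rat) = (\<Sum>k=1..l. 2 ^ b k / 3 ^ k) + 2 ^ j / 3 ^ Suc l"
      by (simp add: b'_def)
    ultimately have "(of_nat x :: rat) =
        2 ^ Suc j * of_nat ((T ^^ Suc j) x) / 3 ^ Suc l - (\<Sum>k=1..Suc l. 2 ^ b' k / 3 ^ k)"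
      using expansion by (simp add: y_def)
    moreover have "strict_mono_on {1..Suc l} b'"
      using mono odd_times by (auto simp: strict_mono_on_def b'_def)
    moreover have "\<forall>k\<in>{1..Suc l}. b' k < Suc j \<and> odd ((T ^^ b' k) x)"
    proof
      fix k assume "k \<in> {1..Suc l}"
      then consider "k \<in> {1..l}" | "k = Suc l" by fastforce
      then show "b' k < Suc j \<and> odd ((T ^^ b' k) x)"
        by cases (use odd_times True in \<open>fastforce simp: b'_def y_def\<close>)+
    qed
    ultimately show ?thesis by blast
  qed
qed

lemma strict_mono_on_bounded_length:
  fixes b :: "nat \<Rightarrow> nat"
  assumes "strict_mono_on {1..l} b" and "\<forall>k\<in>{1..l}. b k \<le> c"
  shows "l \<le> c + 1"
proof -
  have "card {1..l} \<le> card {..c}"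
    using assms by (intro card_inj_on_le[of b]) (auto intro: strict_mono_on_imp_inj_on)
  then show ?thesis by simp
qed

lemma S_funpow:
  assumes "n \<in> S m" and "m \<ge> 1"
  shows "(T ^^ m) n = 1" and "\<And>i. i < m \<Longrightarrow> (T ^^ i) n \<noteq> 1"
proof -
  have "n \<noteq> 1" and "sigma_inf n = enat m"
    using assms by (auto simp: S_def sigma_inf_def zero_enat_def)
  then have reaches_1: "\<exists>k\<ge>1. (T ^^ k) n = 1" and least: "m = (LEAST k. k \<ge> 1 \<and> (T ^^ k) n = 1)"
    by (auto simp: sigma_inf_def split: if_splits)
  show "(T ^^ m) n = 1"
    using LeastI_ex[OF reaches_1] least by simp
  show "(T ^^ i) n \<noteq> 1" if "i < m" for i
    using not_less_Least[of i "\<lambda>k. k \<ge> 1 \<and> (T ^^ k) n = 1"] that least \<open>n \<noteq> 1\<close>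
    by (cases "i = 0") auto
qed

lemma S_tail:
  assumes "n \<in> S m" and "i < min m 3"
  shows "(T ^^ (m - Suc i)) n = 2 ^ Suc i"
  using assms(2)
proof (induction i)
  case 0
  then have "m \<ge> 1" and "m = Suc (m - 1)" by simp_all
  then have "(T ^^ Suc (m - 1)) n = 1"
    using S_funpow(1)[OF assms(1)] by simp
  then show ?case using T_eq_1 by simp
next
  case (Suc i)
  have "m - Suc i = Suc (m - Suc (Suc i))"
    using Suc.prems by arith
  then have image: "T ((T ^^ (m - Suc (Suc i))) n) = 2 ^ Suc i"
    using Suc by simp
  have not_1: "(T ^^ (m - Suc (Suc i))) n \<noteq> 1"
    using S_funpow(2)[OF assms(1)] Suc.prems by simp
  consider "i = 0" | "i = 1"
    using Suc.prems by linarith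
  then show ?case
  proof cases
    case 1
    then show ?thesis using T_eq_2 image not_1 by fastforce
  next
    case 2
    then show ?thesis using T_eq_4 image by simp
  qed
qed

lemma S_odd_times_bound:
  assumes "n \<in> S m" and "j < m" and "odd ((T ^^ j) n)"
  shows "j + 4 \<le> m"
proof (rule ccontr)
  assume "\<not> j + 4 \<le> m"
  then have "m - Suc (m - Suc j) = j" and "m - Suc j < min m 3"
    using assms(2) by auto
  then show False
    using S_tail[OF assms(1), of "m - Suc j"] assms(3) by simp
qed

lemma S_expansion:
  assumes "n \<in> S m" and "m \<ge> 4"
  obtains l b where "l \<le> m - 3" and "strict_mono_on {1..l} b" and "\<forall>k\<in>{1..l}. b k \<le> m - 4"
    and "(of_nat n :: rat) = 2 ^ m / 3 ^ l - (\<Sum>k=1..l. 2 ^ b k / 3 ^ k)"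
proof -
  obtain l b where mono: "strict_mono_on {1..l} b"
    and odd_times: "\<forall>k\<in>{1..l}. b k < m \<and> odd ((T ^^ b k) n)"
    and expansion: "(of_nat n :: rat) = 2 ^ m * of_nat ((T ^^ m) n) / 3 ^ l - (\<Sum>k=1..l. 2 ^ b k / 3 ^ k)"
    using funpow_T_expansion by blast
  have bound: "\<forall>k\<in>{1..l}. b k \<le> m - 4"
  proof
    fix k assume "k \<in> {1..l}"
    then have "b k + 4 \<le> m" using odd_times S_odd_times_bound[OF assms(1)] by blast
    then show "b k \<le> m - 4" by simp
  qed
  have "l \<le> m - 3"
    using strict_mono_on_bounded_length[OF mono bound] assms(2) by simp
  moreover have "(of_nat n :: rat) = 2 ^ m / 3 ^ l - (\<Sum>k=1..l. 2 ^ b k / 3 ^ k)"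
    using expansion S_funpow(1)[OF assms(1)] assms(2) by simp
  ultimately show thesis using that mono bound by blast
qed

theorem mainTheorem3:
  fixes m :: nat
  shows "S m \<subseteq> Lambda m"
proof
  fix n assume n: "n \<in> S m"
  show "n \<in> Lambda m"
  proof (cases "m \<le> 3")
    case True
    then have "n = 2 ^ m"
      using n S_tail[OF n, of "m - 1"] by (cases "m = 0") (simp_all add: S_def)
    then show ?thesis using True by (simp add: Lambda_def)
  next
    case False
    then have "m \<ge> 4" by simp
    then obtain l b where "l \<le> m - 3" and mono: "strict_mono_on {1..l} b"
      and bound: "\<forall>k\<in>{1..l}. b k \<le> m - 4"
      and "(of_nat n :: rat) = 2 ^ m / 3 ^ l - (\<Sum>k=1..l. 2 ^ b k / 3 ^ k)"
      by (rule S_expansion[OF n])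
    moreover have "\<forall>i j. 1 \<le> i \<longrightarrow> i < j \<longrightarrow> j \<le> l \<longrightarrow> b i < b j"
      using mono by (simp add: strict_mono_on_def)
    moreover have "\<forall>k. 1 \<le> k \<longrightarrow> k \<le> l \<longrightarrow> b k \<le> m - 4"
      using bound by simp
    moreover have "n \<ge> 1"
      using n by (simp add: S_def split: if_splits)
    ultimately show ?thesis
      unfolding Lambda_def if_not_P[OF False] mem_Collect_eq by blast
  qed
qed

end
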